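(* Let $G=(V,E)$ be a surjective-only finite simple graph with incidence matrix $A$, and let $\lambda\in\mathbb{R}_{>0}^n$ be such that the matching problem $(G,\lambda)$ is stabilizable. Let $\Pi_{\ge0}=\{\mu\in\mathbb{R}_{\ge0}^m:A\mu=\lambda\}$. For $\mu\in\Pi_{\ge0}$, let $\underline{E}=\{k\in E:\mu_k>0\}$ and $\underline{G}=(V,\underline{E})$. Then $\mu$ is a vertex of the polytope $\Pi_{\ge0}$ if and only if $\underline{G}$ is injective.
   Context: Incidence matrix: $a_{i,k}=1$ iff node $i$ is an endpoint of edge $e_k$. A graph is injective if the linear map $y\mapsto Ay$ defined by its incidence matrix is injective, equivalently every connected component is a tree or a unicyclic graph whose cycle is odd. Surjective-only: every connected component is non-bipartite and the graph is not injective. A vertex of a convex polytope $\Upsilon$ is a point $y\in\Upsilon$ that cannot be written as a convex combination of points of $\Upsilon\setminus\{y\}$. Stabilizability of $(G,\lambda)$ (existence of a policy making the matching Markov chain positive recurrent) is, for surjective $G$, equivalent to the existence of $\mu\in\mathbb{R}_{>0}^m$ with $A\mu=\lambda$. *)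

theory Defs
  imports Complex_Main
begin

text \<open>Vectors in R^m (indexed by edges) are functions 'v set => real that vanish off E;
  vectors in R^n (indexed by nodes) are functions 'v => real considered on V.\<close>

definition simple_graph :: "'v set \<Rightarrow> 'v set set \<Rightarrow> bool" where
  "simple_graph V E \<longleftrightarrow> finite V \<and> (\<forall>e\<in>E. \<exists>a b. a \<in> V \<and> b \<in> V \<and> a \<noteq> b \<and> e = {a, b})"

text \<open>(A y)_i = sum of y_k over edges k incident to node i (incidence matrix a_{ik} = 1 iff i \<in> e_k).\<close>
definition incid_apply :: "'v set set \<Rightarrow> ('v set \<Rightarrow> real) \<Rightarrow> 'v \<Rightarrow> real" where
  "incid_apply E y i = (\<Sum>k\<in>{k\<in>E. i \<in> k}. y k)"

definition edge_vec :: "'v set set \<Rightarrow> ('v set \<Rightarrow> real) \<Rightarrow> bool" where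
  "edge_vec E y \<longleftrightarrow> (\<forall>k. k \<notin> E \<longrightarrow> y k = 0)"

definition injective_graph :: "'v set \<Rightarrow> 'v set set \<Rightarrow> bool" where
  "injective_graph V E \<longleftrightarrow>
     (\<forall>y z. edge_vec E y \<longrightarrow> edge_vec E z \<longrightarrow>
        (\<forall>i\<in>V. incid_apply E y i = incid_apply E z i) \<longrightarrow> y = z)"

definition adjacent :: "'v set set \<Rightarrow> 'v \<Rightarrow> 'v \<Rightarrow> bool" where
  "adjacent E a b \<longleftrightarrow> {a, b} \<in> E"

definition component :: "'v set \<Rightarrow> 'v set set \<Rightarrow> 'v \<Rightarrow> 'v set" where
  "component V E v = {u \<in> V. (adjacent E)\<^sup>*\<^sup>* v u}"

definition bipartite_on :: "'v set set \<Rightarrow> 'v set \<Rightarrow> bool" where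
  "bipartite_on E C \<longleftrightarrow> (\<exists>f :: 'v \<Rightarrow> bool. \<forall>a b. {a, b} \<in> E \<longrightarrow> a \<in> C \<longrightarrow> b \<in> C \<longrightarrow> f a \<noteq> f b)"

definition surjective_only :: "'v set \<Rightarrow> 'v set set \<Rightarrow> bool" where
  "surjective_only V E \<longleftrightarrow>
     (\<forall>v\<in>V. \<not> bipartite_on E (component V E v)) \<and> \<not> injective_graph V E"

text \<open>Stabilizability, via the characterization valid for surjective graphs (given in the context):
  existence of \<mu> > 0 on E with A \<mu> = \<lambda>.\<close>
definition stabilizable :: "'v set \<Rightarrow> 'v set set \<Rightarrow> ('v \<Rightarrow> real) \<Rightarrow> bool" where
  "stabilizable V E lam \<longleftrightarrow>
     (\<exists>\<mu>. edge_vec E \<mu> \<and> (\<forall>k\<in>E. \<mu> k > 0) \<and> (\<forall>i\<in>V. incid_apply E \<mu> i = lam i))"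

definition Pi_nonneg :: "'v set \<Rightarrow> 'v set set \<Rightarrow> ('v \<Rightarrow> real) \<Rightarrow> ('v set \<Rightarrow> real) set" where
  "Pi_nonneg V E lam = {\<mu>. edge_vec E \<mu> \<and> (\<forall>k\<in>E. \<mu> k \<ge> 0) \<and> (\<forall>i\<in>V. incid_apply E \<mu> i = lam i)}"

definition is_vertex :: "('e \<Rightarrow> real) set \<Rightarrow> ('e \<Rightarrow> real) \<Rightarrow> bool" where
  "is_vertex U y \<longleftrightarrow> y \<in> U \<and>
     \<not> (\<exists>S c. finite S \<and> S \<subseteq> U - {y} \<and> (\<forall>x\<in>S. c x \<ge> (0::real)) \<and> sum c S = 1 \<and>
            y = (\<lambda>k. \<Sum>x\<in>S. c x * x k))"

end

theory Submission
  imports Defs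
begin

text \<open>This is the graph instance of the fact that a point of a polyhedron
  \<open>{x \<ge> 0. A x = \<lambda>}\<close> is a vertex iff the columns of \<open>A\<close> on its support are linearly
  independent. If a nonzero \<open>d\<close> supported on the support of \<open>\<mu>\<close> satisfies \<open>A d = 0\<close>,
  then \<open>\<mu> \<plusminus> \<epsilon> d\<close> stay in the polytope for small \<open>\<epsilon>\<close> and \<open>\<mu>\<close> is their midpoint.
  Conversely, every point of a convex combination representing \<open>\<mu>\<close> with positive
  weight vanishes off the support of \<open>\<mu>\<close>, so it solves the same injective system
  and equals \<open>\<mu>\<close>.\<close>

lemma finite_edges_if_simple_graph:
  assumes "simple_graph V E"
  shows "finite E"
proof -
  have "E \<subseteq> Pow V"
    using assms unfolding simple_graph_def by fastforce
  moreover have "finite V"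
    using assms unfolding simple_graph_def by simp
  ultimately show ?thesis
    by (meson finite_Pow_iff finite_subset)
qed

lemma incid_apply_subset_edges:
  assumes "finite E" "F \<subseteq> E" "edge_vec F y"
  shows "incid_apply F y i = incid_apply E y i"
  unfolding incid_apply_def
  using assms by (intro sum.mono_neutral_left) (auto simp: edge_vec_def)

lemma incid_apply_add_scaled:
  "incid_apply E (\<lambda>k. y k + s * d k) i = incid_apply E y i + s * incid_apply E d i"
  unfolding incid_apply_def by (simp add: sum.distrib sum_distrib_left)

lemma injective_graph_iff_trivial_kernel:
  "injective_graph V E \<longleftrightarrow>
     (\<forall>d. edge_vec E d \<longrightarrow> (\<forall>i\<in>V. incid_apply E d i = 0) \<longrightarrow> d = (\<lambda>k. 0))"
proof
  assume inj: "injective_graph V E"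
  show "\<forall>d. edge_vec E d \<longrightarrow> (\<forall>i\<in>V. incid_apply E d i = 0) \<longrightarrow> d = (\<lambda>k. 0)"
  proof (intro allI impI)
    fix d assume "edge_vec E d" "\<forall>i\<in>V. incid_apply E d i = 0"
    moreover have "incid_apply E (\<lambda>k. 0) i = 0" for i
      unfolding incid_apply_def by simp
    ultimately show "d = (\<lambda>k. 0)"
      using inj unfolding injective_graph_def edge_vec_def by simp
  qed
next
  assume kernel: "\<forall>d. edge_vec E d \<longrightarrow> (\<forall>i\<in>V. incid_apply E d i = 0) \<longrightarrow> d = (\<lambda>k. 0)"
  show "injective_graph V E"
    unfolding injective_graph_def
  proof (intro allI impI)
    fix y z
    assume "edge_vec E y" "edge_vec E z" "\<forall>i\<in>V. incid_apply E y i = incid_apply E z i"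
    then have "edge_vec E (\<lambda>k. y k - z k)"
      and "\<forall>i\<in>V. incid_apply E (\<lambda>k. y k - z k) i = 0"
      by (auto simp: edge_vec_def incid_apply_def sum_subtractf)
    then have "(\<lambda>k. y k - z k) = (\<lambda>k. 0)"
      using kernel by blast
    then show "y = z"
      by (simp add: fun_eq_iff)
  qed
qed

lemma exists_pos_scale_below:
  fixes f g :: "'a \<Rightarrow> real"
  assumes "finite F" "\<forall>k\<in>F. f k > 0"
  shows "\<exists>\<epsilon>>0. \<forall>k\<in>F. \<epsilon> * \<bar>g k\<bar> \<le> f k"
  using assms
proof (induction F rule: finite_induct)
  case empty
  show ?case by (intro exI[of _ 1]) simp
next
  case (insert k F)
  then obtain \<epsilon> where "\<epsilon> > 0" and \<epsilon>: "\<forall>j\<in>F. \<epsilon> * \<bar>g j\<bar> \<le> f j"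
    by auto
  define \<delta> where "\<delta> = min \<epsilon> (f k / (\<bar>g k\<bar> + 1))"
  have "\<delta> > 0"
    using \<open>\<epsilon> > 0\<close> insert.prems by (simp add: \<delta>_def)
  moreover have "\<delta> * \<bar>g k\<bar> \<le> f k"
  proof -
    have "\<delta> * \<bar>g k\<bar> \<le> f k / (\<bar>g k\<bar> + 1) * (\<bar>g k\<bar> + 1)"
      using \<open>\<delta> > 0\<close> by (intro mult_mono) (auto simp: \<delta>_def)
    then show ?thesis by simp
  qed
  moreover have "\<delta> * \<bar>g j\<bar> \<le> f j" if "j \<in> F" for j
  proof -
    have "\<delta> * \<bar>g j\<bar> \<le> \<epsilon> * \<bar>g j\<bar>"
      by (intro mult_right_mono) (auto simp: \<delta>_def)
    then show ?thesis using \<epsilon> that by fastforce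
  qed
  ultimately show ?case by auto
qed

lemma Pi_nonneg_perturb:
  assumes "finite E" "\<mu> \<in> Pi_nonneg V E lam"
    and "edge_vec {k\<in>E. \<mu> k > 0} d" "\<forall>i\<in>V. incid_apply E d i = 0"
  shows "\<exists>\<epsilon>>0. \<forall>s. \<bar>s\<bar> \<le> \<epsilon> \<longrightarrow> (\<lambda>k. \<mu> k + s * d k) \<in> Pi_nonneg V E lam"
proof -
  have "finite {k\<in>E. \<mu> k > 0}" "\<forall>k\<in>{k\<in>E. \<mu> k > 0}. \<mu> k > 0"
    using \<open>finite E\<close> by simp_all
  then obtain \<epsilon> where "\<epsilon> > 0" and \<epsilon>: "\<forall>k\<in>{k\<in>E. \<mu> k > 0}. \<epsilon> * \<bar>d k\<bar> \<le> \<mu> k"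
    using exists_pos_scale_below by blast
  have "(\<lambda>k. \<mu> k + s * d k) \<in> Pi_nonneg V E lam" if "\<bar>s\<bar> \<le> \<epsilon>" for s
  proof -
    have "0 \<le> \<mu> k + s * d k" if "k \<in> E" for k
    proof (cases "\<mu> k > 0")
      case True
      have "\<bar>s * d k\<bar> \<le> \<epsilon> * \<bar>d k\<bar>"
        using \<open>\<bar>s\<bar> \<le> \<epsilon>\<close> by (simp add: abs_mult mult_right_mono)
      then show ?thesis using \<epsilon> True \<open>k \<in> E\<close> by auto
    next
      case False
      then show ?thesis using assms(2,3) that by (auto simp: Pi_nonneg_def edge_vec_def)
    qed
    then show ?thesis
      using assms(2-4) by (auto simp: Pi_nonneg_def edge_vec_def incid_apply_add_scaled)
  qed
  then show ?thesis using \<open>\<epsilon> > 0\<close> by blast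
qed

lemma not_vertex_if_midpoint:
  fixes p q :: "'e \<Rightarrow> real"
  assumes "p \<in> U" "q \<in> U" "p \<noteq> q" "y = (\<lambda>k. (p k + q k) / 2)"
  shows "\<not> is_vertex U y"
proof -
  obtain k where "p k \<noteq> q k"
    using assms(3) by auto
  then have "p k \<noteq> y k" "q k \<noteq> y k"
    using assms(4) by auto
  then have "p \<noteq> y" "q \<noteq> y"
    by auto
  then have "{p, q} \<subseteq> U - {y}"
    using assms(1,2) by blast
  moreover have "y = (\<lambda>k. \<Sum>x\<in>{p, q}. 1/2 * x k)"
    using assms(3,4) by (simp add: fun_eq_iff field_simps)
  moreover have "sum (\<lambda>_. 1/2) {p, q} = (1::real)"
    using assms(3) by simp
  ultimately have "\<exists>S c. finite S \<and> S \<subseteq> U - {y} \<and> (\<forall>x\<in>S. c x \<ge> (0::real)) \<and>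
      sum c S = 1 \<and> y = (\<lambda>k. \<Sum>x\<in>S. c x * x k)"
    by (intro exI[of _ "{p, q}"] exI[of _ "\<lambda>_. 1/2"]) simp
  then show ?thesis
    unfolding is_vertex_def by blast
qed

lemma injective_support_if_vertex:
  assumes "finite E" "is_vertex (Pi_nonneg V E lam) \<mu>"
  shows "injective_graph V {k\<in>E. \<mu> k > 0}"
  unfolding injective_graph_iff_trivial_kernel
proof (intro allI impI, rule ccontr)
  fix d
  assume d_supp: "edge_vec {k\<in>E. \<mu> k > 0} d"
    and d_ker: "\<forall>i\<in>V. incid_apply {k\<in>E. \<mu> k > 0} d i = 0" and "d \<noteq> (\<lambda>k. 0)"
  have "\<mu> \<in> Pi_nonneg V E lam"
    using assms(2) unfolding is_vertex_def by simp
  moreover have "\<forall>i\<in>V. incid_apply E d i = 0"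
    using d_ker incid_apply_subset_edges[OF \<open>finite E\<close> _ d_supp] by simp
  ultimately obtain \<epsilon> where "\<epsilon> > 0"
    and \<epsilon>: "\<forall>s. \<bar>s\<bar> \<le> \<epsilon> \<longrightarrow> (\<lambda>k. \<mu> k + s * d k) \<in> Pi_nonneg V E lam"
    using Pi_nonneg_perturb[OF \<open>finite E\<close> _ d_supp] by blast
  define p where "p = (\<lambda>k. \<mu> k + \<epsilon> * d k)"
  define q where "q = (\<lambda>k. \<mu> k + (-\<epsilon>) * d k)"
  have "p \<in> Pi_nonneg V E lam" "q \<in> Pi_nonneg V E lam"
    using \<epsilon>[rule_format, of \<epsilon>] \<epsilon>[rule_format, of "-\<epsilon>"] \<open>\<epsilon> > 0\<close>
    by (simp_all add: p_def q_def)
  moreover have "p \<noteq> q"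
    using \<open>d \<noteq> (\<lambda>k. 0)\<close> \<open>\<epsilon> > 0\<close> by (auto simp: p_def q_def fun_eq_iff)
  moreover have "\<mu> = (\<lambda>k. (p k + q k) / 2)"
    by (simp add: p_def q_def)
  ultimately have "\<not> is_vertex (Pi_nonneg V E lam) \<mu>"
    by (rule not_vertex_if_midpoint)
  then show False using assms(2) by contradiction
qed

lemma nonneg_combination_eq_0_imp_eq_0:
  fixes c :: "('e \<Rightarrow> real) \<Rightarrow> real"
  assumes "finite S" "\<forall>y\<in>S. c y \<ge> 0 \<and> y k \<ge> 0" "(\<Sum>y\<in>S. c y * y k) = 0"
    and "x \<in> S" "c x > 0"
  shows "x k = 0"
proof -
  have "c x * x k = 0"
    using sum_nonneg_eq_0_iff[OF assms(1), of "\<lambda>y. c y * y k"] assms(2-4) by simp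
  then show ?thesis
    using \<open>c x > 0\<close> by simp
qed

lemma vertex_if_injective_support:
  assumes "finite E" "\<mu> \<in> Pi_nonneg V E lam" "injective_graph V {k\<in>E. \<mu> k > 0}"
  shows "is_vertex (Pi_nonneg V E lam) \<mu>"
  unfolding is_vertex_def
proof (intro conjI notI)
  show "\<mu> \<in> Pi_nonneg V E lam"
    by (fact assms(2))
next
  let ?F = "{k\<in>E. \<mu> k > 0}"
  assume "\<exists>S c. finite S \<and> S \<subseteq> Pi_nonneg V E lam - {\<mu>} \<and> (\<forall>x\<in>S. c x \<ge> 0) \<and>
            sum c S = 1 \<and> \<mu> = (\<lambda>k. \<Sum>x\<in>S. c x * x k)"
  then obtain S c where "finite S" and S: "S \<subseteq> Pi_nonneg V E lam - {\<mu>}"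
    and c_nonneg: "\<forall>x\<in>S. c x \<ge> 0" and "sum c S = 1" and \<mu>_eq: "\<mu> = (\<lambda>k. \<Sum>x\<in>S. c x * x k)"
    by blast
  have "\<exists>x\<in>S. c x \<noteq> 0"
    using \<open>sum c S = 1\<close> by (metis sum.neutral zero_neq_one)
  then obtain x where "x \<in> S" and "c x > 0"
    using c_nonneg by force
  have x_in: "x \<in> Pi_nonneg V E lam"
    using S \<open>x \<in> S\<close> by blast
  have supp_\<mu>: "edge_vec ?F \<mu>"
    using assms(2) by (force simp: Pi_nonneg_def edge_vec_def)
  have supp_x: "edge_vec ?F x"
    unfolding edge_vec_def
  proof (intro allI impI)
    fix k assume "k \<notin> ?F"
    show "x k = 0"
    proof (cases "k \<in> E")
      case True
      with \<open>k \<notin> ?F\<close> have "\<mu> k = 0"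
        using assms(2) by (force simp: Pi_nonneg_def)
      then have "(\<Sum>y\<in>S. c y * y k) = 0"
        using fun_cong[OF \<mu>_eq, of k] by simp
      moreover have "\<forall>y\<in>S. c y \<ge> 0 \<and> y k \<ge> 0"
        using S c_nonneg True by (auto simp: Pi_nonneg_def)
      ultimately show ?thesis
        using nonneg_combination_eq_0_imp_eq_0[OF \<open>finite S\<close>] \<open>x \<in> S\<close> \<open>c x > 0\<close> by blast
    next
      case False
      then show ?thesis using x_in by (simp add: Pi_nonneg_def edge_vec_def)
    qed
  qed
  have "incid_apply ?F x i = incid_apply ?F \<mu> i" if "i \<in> V" for i
    using that x_in assms(2)
    by (simp add: incid_apply_subset_edges[OF \<open>finite E\<close> _ supp_x]
        incid_apply_subset_edges[OF \<open>finite E\<close> _ supp_\<mu>] Pi_nonneg_def)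
  then have "x = \<mu>"
    using assms(3) supp_x supp_\<mu> unfolding injective_graph_def by blast
  then show False using S \<open>x \<in> S\<close> by blast
qed

theorem proposition5p6:
  fixes V :: "'v set" and E :: "'v set set" and lam :: "'v \<Rightarrow> real" and \<mu> :: "'v set \<Rightarrow> real"
  assumes "simple_graph V E"
    and "surjective_only V E"
    and "\<forall>i\<in>V. lam i > 0"
    and "stabilizable V E lam"
    and "\<mu> \<in> Pi_nonneg V E lam"
  shows "is_vertex (Pi_nonneg V E lam) \<mu> \<longleftrightarrow> injective_graph V {k\<in>E. \<mu> k > 0}"
  using finite_edges_if_simple_graph[OF assms(1)] assms(5)
    injective_support_if_vertex vertex_if_injective_support by blast

end
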